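(* For every integer $n\ge 1$, the resistance distance in the ladder graph $L_n$ (unit edge resistances) satisfies \[ r_{L_n}(1,2)=r_{L_n}(2n-1,2n)=\frac{(2+\sqrt3)^n(\sqrt3-1)+(2-\sqrt3)^n(\sqrt3+1)}{(2+\sqrt3)^n-(2-\sqrt3)^n}. \]
   Context: The ladder graph $L_n$ has vertex set $\{1,\dots,2n\}$ and edges $\{2k-1,2k\}$ for $k=1,\dots,n$, together with $\{2k-1,2k+1\}$ and $\{2k,2k+2\}$ for $k=1,\dots,n-1$; each edge has resistance $1$. The resistance distance $r_G(u,v)$ is the potential difference between $u$ and $v$ when one unit of current enters at $u$ and leaves at $v$; equivalently $r_G(u,v)=(\mathbf e_u-\mathbf e_v)^T L^\dagger(\mathbf e_u-\mathbf e_v)$ with $L$ the combinatorial Laplacian of $G$. *)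

theory Defs
  imports Complex_Main
begin

text \<open>Graphs on the vertex set {1..N}, given by a symmetric irreflexive
adjacency relation E; every edge has unit resistance.\<close>

definition ladder_edge :: "nat \<Rightarrow> nat \<Rightarrow> nat \<Rightarrow> bool" where
  "ladder_edge n a b \<longleftrightarrow>
     (\<exists>k\<in>{1..n}. {a, b} = {2*k - 1, 2*k}) \<or>
     (\<exists>k\<in>{1..<n}. {a, b} = {2*k - 1, 2*k + 1} \<or> {a, b} = {2*k, 2*k + 2})"

definition laplacian :: "(nat \<Rightarrow> nat \<Rightarrow> bool) \<Rightarrow> nat \<Rightarrow> nat \<Rightarrow> nat \<Rightarrow> real" where
  "laplacian E N i j =
     (if i = j then real (card {k\<in>{1..N}. E i k}) else if E i j then -1 else 0)"

text \<open>A potential x realises unit current entering at u and leaving at v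
  iff L x = e_u - e_v (Kirchhoff/Ohm).\<close>
definition is_potential :: "(nat \<Rightarrow> nat \<Rightarrow> bool) \<Rightarrow> nat \<Rightarrow> nat \<Rightarrow> nat \<Rightarrow> (nat \<Rightarrow> real) \<Rightarrow> bool" where
  "is_potential E N u v x \<longleftrightarrow>
     (\<forall>i\<in>{1..N}. (\<Sum>j=1..N. laplacian E N i j * x j) =
        (if i = u then 1 else 0) - (if i = v then 1 else 0))"

text \<open>Resistance distance: potential difference between u and v
  (well defined for a connected graph).\<close>
definition resistance :: "(nat \<Rightarrow> nat \<Rightarrow> bool) \<Rightarrow> nat \<Rightarrow> nat \<Rightarrow> nat \<Rightarrow> real" where
  "resistance E N u v = (let x = (SOME x. is_potential E N u v x) in x u - x v)"

end

theory Submission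
  imports Defs
begin

(* Send unit current into one end of a rung and out of the other. Swapping the two rails
   reverses the current, so a potential antisymmetric across every rung exists,
   x (2k-1) = c k = - x (2k), and Kirchhoff's law reduces to the tridiagonal system
   (2 I + L_path) c = e_k on the path of rungs. For the last rung its solution is
   c k = h (k-1) / (h n - h (n-1)) with h j = (2+sqrt 3)^(j+1) + (2-sqrt 3)^j, the solution of
   h (j+2) = 4 h (j+1) - h j with h 1 = 3 h 0; reflecting the ladder end to end handles the
   first rung. Since 2 I + L_path is nonsingular, every potential has the same drop 2 c k across
   the rung, and that drop is the resistance. *)

lemma ladder_edge_iff: "ladder_edge n a b \<longleftrightarrow> 1 \<le> min a b \<and> max a b \<le> 2*n \<and>
   ((b = a+1 \<and> odd a) \<or> (a = b+1 \<and> odd b) \<or> b = a+2 \<or> a = b+2)"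
  (is "_ \<longleftrightarrow> ?bounds \<and> ?adjacent")
proof
  assume "ladder_edge n a b"
  then show "?bounds \<and> ?adjacent"
    unfolding ladder_edge_def by (auto simp: doubleton_eq_iff; presburger)
next
  assume h: "?bounds \<and> ?adjacent"
  then consider "b = a+1" "odd a" | "a = b+1" "odd b" | "b = a+2" | "a = b+2" by blast
  then show "ladder_edge n a b"
  proof cases
    case 1
    then show ?thesis unfolding ladder_edge_def using h by (intro disjI1 bexI[of _ "(a+1) div 2"]) (auto simp: doubleton_eq_iff elim!: oddE)
  next
    case 2
    then show ?thesis unfolding ladder_edge_def using h by (intro disjI1 bexI[of _ "(b+1) div 2"]) (auto simp: doubleton_eq_iff elim!: oddE)
  next
    case 3
    then show ?thesis unfolding ladder_edge_def using h by (intro disjI2[OF bexI[of _ "(a+1) div 2"]]) (auto simp: doubleton_eq_iff elim!: oddE evenE)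
  next
    case 4
    then show ?thesis unfolding ladder_edge_def using h by (intro disjI2[OF bexI[of _ "(b+1) div 2"]]) (auto simp: doubleton_eq_iff elim!: oddE evenE)
  qed
qed

lemma laplacian_apply_eq_neighbour_sum:
  assumes irr: "\<And>a. \<not> E a a" and i: "i \<in> {1..N}"
  shows "(\<Sum>j=1..N. laplacian E N i j * y j) = (\<Sum>j\<in>{k\<in>{1..N}. E i k}. y i - y j)"
proof -
  let ?S = "{k\<in>{1..N}. E i k}"
  have "(\<Sum>j=1..N. laplacian E N i j * y j) = laplacian E N i i * y i + (\<Sum>j\<in>{1..N}-{i}. laplacian E N i j * y j)"
    using i by (simp add: sum.remove)
  also have "(\<Sum>j\<in>{1..N}-{i}. laplacian E N i j * y j) = (\<Sum>j\<in>{1..N}-{i}. if E i j then - y j else 0)"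
    by (rule sum.cong) (auto simp: laplacian_def)
  also have "\<dots> = (\<Sum>j\<in>?S. - y j)"
    using irr by (simp add: sum.If_cases) (rule sum.cong, auto)
  finally show ?thesis
    by (simp add: laplacian_def sum_subtractf sum_negf)
qed

lemma ladder_edge_irrefl: "\<not> ladder_edge n a a"
  by (simp add: ladder_edge_iff)

lemma ladder_neighbours_odd:
  assumes "1 \<le> k" "k \<le> n"
  shows "{j\<in>{1..2*n}. ladder_edge n (2*k-1) j} =
     {2*k} \<union> (if 1 < k then {2*k-3} else {}) \<union> (if k < n then {2*k+1} else {})"
  using assms by (auto simp: ladder_edge_iff split: if_splits; presburger)

lemma ladder_neighbours_even:
  assumes "1 \<le> k" "k \<le> n"
  shows "{j\<in>{1..2*n}. ladder_edge n (2*k) j} =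
     {2*k-1} \<union> (if 1 < k then {2*k-2} else {}) \<union> (if k < n then {2*k+2} else {})"
  using assms by (auto simp: ladder_edge_iff split: if_splits; presburger)

definition ladder_lap :: "nat \<Rightarrow> (nat \<Rightarrow> real) \<Rightarrow> nat \<Rightarrow> real" where
  "ladder_lap n y i = (\<Sum>j=1..2*n. laplacian (ladder_edge n) (2*n) i j * y j)"

lemma ladder_lap_odd:
  assumes "1 \<le> k" "k \<le> n"
  shows "ladder_lap n y (2*k-1) = (y (2*k-1) - y (2*k))
     + (if 1 < k then y (2*k-1) - y (2*k-3) else 0)
     + (if k < n then y (2*k-1) - y (2*k+1) else 0)"
proof -
  have "ladder_lap n y (2*k-1) = (\<Sum>j\<in>{j\<in>{1..2*n}. ladder_edge n (2*k-1) j}. y (2*k-1) - y j)"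
    unfolding ladder_lap_def
    by (rule laplacian_apply_eq_neighbour_sum) (use assms ladder_edge_irrefl in auto)
  then show ?thesis
    unfolding ladder_neighbours_odd[OF assms] using assms by (cases "1 < k"; cases "k < n") auto
qed

lemma ladder_lap_even:
  assumes "1 \<le> k" "k \<le> n"
  shows "ladder_lap n y (2*k) = (y (2*k) - y (2*k-1))
     + (if 1 < k then y (2*k) - y (2*k-2) else 0)
     + (if k < n then y (2*k) - y (2*k+2) else 0)"
proof -
  have "ladder_lap n y (2*k) = (\<Sum>j\<in>{j\<in>{1..2*n}. ladder_edge n (2*k) j}. y (2*k) - y j)"
    unfolding ladder_lap_def
    by (rule laplacian_apply_eq_neighbour_sum) (use assms ladder_edge_irrefl in auto)
  moreover have "2*k-2 \<noteq> 2*k-1" "2*k+2 \<noteq> 2*k-2" "2*k+2 \<noteq> 2*k-1"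
    using assms by auto
  ultimately show ?thesis
    unfolding ladder_neighbours_even[OF assms] by (cases "1 < k"; cases "k < n") auto
qed

lemma ladder_vertex_cases:
  fixes i n :: nat
  assumes "i \<in> {1..2*n}"
  obtains k where "1 \<le> k" "k \<le> n" "i = 2*k-1" | k where "1 \<le> k" "k \<le> n" "i = 2*k"
proof (cases "odd i")
  case True
  then show ?thesis using that(1)[of "(i+1) div 2"] assms by (auto elim!: oddE)
next
  case False
  then show ?thesis using that(2)[of "i div 2"] assms by (auto elim!: evenE)
qed

(* 2 I plus the Laplacian of the path 1..n: the ladder Laplacian acting on potentials that are
   antisymmetric across every rung (see ladder_lap_rung_antisym). *)
definition rung_op :: "nat \<Rightarrow> (nat \<Rightarrow> real) \<Rightarrow> nat \<Rightarrow> real" where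
  "rung_op n c k = 2 * c k + (if 1 < k then c k - c (k-1) else 0) + (if k < n then c k - c (k+1) else 0)"

definition rung_antisym :: "(nat \<Rightarrow> real) \<Rightarrow> nat \<Rightarrow> real" where
  "rung_antisym c i = (if odd i then c ((i+1) div 2) else - c (i div 2))"

lemma rung_antisym_odd: "1 \<le> k \<Longrightarrow> rung_antisym c (2*k-1) = c k"
  unfolding rung_antisym_def by (auto elim!: oddE)

lemma rung_antisym_even: "rung_antisym c (2*k) = - c k"
  unfolding rung_antisym_def by simp

lemma ladder_lap_rung_antisym:
  assumes "1 \<le> k" "k \<le> n"
  shows "ladder_lap n (rung_antisym c) (2*k-1) = rung_op n c k"
    and "ladder_lap n (rung_antisym c) (2*k) = - rung_op n c k"
proof -
  have "rung_antisym c (2*k-3) = c (k-1)" if "1 < k"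
  proof -
    have "2*k-3 = 2*(k-1)-1" using that by simp
    then show ?thesis using rung_antisym_odd[of "k-1" c] that by simp
  qed
  moreover have "rung_antisym c (2*k+1) = c (k+1)" "rung_antisym c (2*k-2) = - c (k-1)"
    "rung_antisym c (2*k+2) = - c (k+1)"
    using rung_antisym_odd[of "k+1" c] rung_antisym_even[of c "k-1"] rung_antisym_even[of c "k+1"]
    by (simp_all add: right_diff_distrib')
  moreover have "rung_antisym c (2*k-1) = c k" "rung_antisym c (2*k) = - c k"
    by (rule rung_antisym_odd[OF assms(1)], rule rung_antisym_even)
  ultimately show "ladder_lap n (rung_antisym c) (2*k-1) = rung_op n c k"
    and "ladder_lap n (rung_antisym c) (2*k) = - rung_op n c k"
    unfolding ladder_lap_odd[OF assms] ladder_lap_even[OF assms] rung_op_def by auto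
qed

lemma ladder_lap_rung_drop:
  assumes "1 \<le> k" "k \<le> n"
  shows "ladder_lap n y (2*k-1) - ladder_lap n y (2*k) = rung_op n (\<lambda>k. y (2*k-1) - y (2*k)) k"
proof -
  have "2*(k-1) - 1 = 2*k-3" "2*(k-1) = 2*k-2" by (simp_all add: numeral_3_eq_3 right_diff_distrib')
  then show ?thesis
    unfolding ladder_lap_odd[OF assms] ladder_lap_even[OF assms] rung_op_def by auto
qed

lemma rung_op_scale: "rung_op n (\<lambda>k. a * c k) k = a * rung_op n c k"
  by (simp add: rung_op_def algebra_simps)

lemma rung_op_reflect:
  assumes "1 \<le> k" "k \<le> n"
  shows "rung_op n (\<lambda>k. c (n+1-k)) k = rung_op n c (n+1-k)"
proof -
  have "(1 < n+1-k) = (k < n)" "(n+1-k < n) = (1 < k)" "n+1-k-1 = n+1-(k+1)" "n+1-k+1 = n+1-(k-1)"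
    using assms by auto
  then show ?thesis unfolding rung_op_def by auto
qed

lemma power_recurrence_of_root:
  fixes x :: real
  assumes "x^2 = 4*x - 1"
  shows "x^(j+2) = 4 * x^(j+1) - x^j"
proof -
  have "x^(j+2) = x^j * x^2" by (rule power_add)
  also have "\<dots> = 4 * (x^j * x) - x^j" unfolding assms by (simp add: algebra_simps)
  finally show ?thesis by simp
qed

lemma sqrt3_conjugate_roots:
  "(2 + sqrt 3)^2 = 4 * (2 + sqrt 3) - (1::real)" "(2 - sqrt 3)^2 = 4 * (2 - sqrt 3) - (1::real)"
  by (simp_all add: power2_sum power2_diff)

(* The solution of the interior equations of rung_op (h (j+2) = 4 h (j+1) - h j, h 1 = 3 h 0),
   written in terms of the roots 2 +- sqrt 3 of x^2 = 4 x - 1. *)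
definition ladder_h :: "nat \<Rightarrow> real" where
  "ladder_h j = (2 + sqrt 3)^(j+1) + (2 - sqrt 3)^j"

lemma ladder_h_recurrence: "ladder_h (j+2) = 4 * ladder_h (j+1) - ladder_h j"
proof -
  from power_recurrence_of_root[OF sqrt3_conjugate_roots(1), of "j+1"]
    power_recurrence_of_root[OF sqrt3_conjugate_roots(2), of j]
  show ?thesis
    unfolding ladder_h_def by (simp add: algebra_simps del: power_Suc)
qed

lemma ladder_h_1: "ladder_h 1 = 3 * ladder_h 0"
  using sqrt3_conjugate_roots(1) by (simp add: ladder_h_def power2_eq_square)

lemma ladder_h_0_pos: "0 < ladder_h 0"
  by (simp add: ladder_h_def add_pos_nonneg)

lemma ladder_h_via_Suc_powers:
  "ladder_h m = (2 + sqrt 3)^Suc m + (2 + sqrt 3) * (2 - sqrt 3)^Suc m"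
  "ladder_h (Suc m) = (2 + sqrt 3) * (2 + sqrt 3)^Suc m + (2 - sqrt 3)^Suc m"
proof -
  have "(2 + sqrt 3) * (2 - sqrt 3) = (1::real)"
    by (simp add: algebra_simps)
  then have "(2 - sqrt 3)^m = (2 + sqrt 3) * (2 - sqrt 3)^Suc m"
    by (simp add: mult.assoc[symmetric])
  then show "ladder_h m = (2 + sqrt 3)^Suc m + (2 + sqrt 3) * (2 - sqrt 3)^Suc m"
    unfolding ladder_h_def by simp
  show "ladder_h (Suc m) = (2 + sqrt 3) * (2 + sqrt 3)^Suc m + (2 - sqrt 3)^Suc m"
    unfolding ladder_h_def by simp
qed

lemma ladder_h_Suc_diff:
  "ladder_h (Suc m) - ladder_h m = (1 + sqrt 3) * ((2 + sqrt 3)^Suc m - (2 - sqrt 3)^Suc m)"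
  unfolding ladder_h_via_Suc_powers(2) ladder_h_via_Suc_powers(1)[of m]
  by (simp add: algebra_simps del: power_Suc)

lemma ladder_h_double:
  "2 * ladder_h m = (1 + sqrt 3) * ((2 + sqrt 3)^Suc m * (sqrt 3 - 1) + (2 - sqrt 3)^Suc m * (sqrt 3 + 1))"
proof -
  have "(1 + s) * (A * (s - 1) + B * (s + 1)) = (s^2 - 1) * A + (s^2 + 2*s + 1) * B" for A B s :: real
    by (simp add: algebra_simps power2_eq_square)
  moreover have "sqrt 3 ^ 2 = (3::real)" by simp
  ultimately show ?thesis
    unfolding ladder_h_via_Suc_powers(1)[of m] by (simp add: algebra_simps del: power_Suc)
qed

lemma ladder_h_Suc_diff_pos: "0 < ladder_h (Suc m) - ladder_h m"
proof -
  have "(2 - sqrt 3)^Suc m < (2 + sqrt 3)^Suc m"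
    by (rule power_strict_mono) (auto simp: real_le_lsqrt)
  then show ?thesis unfolding ladder_h_Suc_diff by (simp add: add_pos_nonneg)
qed

lemma rung_op_ladder_h:
  assumes "1 \<le> k" "k \<le> n"
  shows "rung_op n (\<lambda>k. ladder_h (k-1)) k = (if k = n then ladder_h n - ladder_h (n-1) else 0)"
proof (cases "k = 1")
  case True
  then show ?thesis using assms ladder_h_1 by (auto simp: rung_op_def)
next
  case False
  then obtain j where "k = j + 2" using assms by (intro that[of "k-2"]) auto
  then show ?thesis using assms ladder_h_recurrence[of j] by (auto simp: rung_op_def)
qed

lemma rung_op_interior_multiple:
  assumes interior: "\<And>k. 1 \<le> k \<Longrightarrow> k < n \<Longrightarrow> rung_op n d k = 0"
    and "1 \<le> k" "k \<le> n"
  shows "d k * ladder_h 0 = d 1 * ladder_h (k-1)"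
  using assms(2,3)
proof (induction k rule: less_induct)
  case (less k)
  have "k = 1 \<or> k = 2 \<or> (\<exists>j. k = j + 3)"
    using less.prems by presburger
  then consider "k = 1" | "k = 2" | j where "k = j + 3" by blast
  then show ?case
  proof cases
    case 1
    then show ?thesis by simp
  next
    case 2
    then have "d 2 = 3 * d 1" using interior[of 1] less.prems by (simp add: rung_op_def numeral_2_eq_2)
    then show ?thesis using 2 ladder_h_1 by simp
  next
    case 3
    have recurrence: "d (j+3) = 4 * d (j+2) - d (j+1)"
      using interior[of "j+2"] less.prems 3 by (simp add: rung_op_def numeral_3_eq_3)
    have "d (j+3) * ladder_h 0 = 4 * (d (j+2) * ladder_h 0) - d (j+1) * ladder_h 0"
      unfolding recurrence by (simp add: algebra_simps)
    also have "\<dots> = d 1 * (4 * ladder_h (j+1) - ladder_h j)"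
      using less.IH[of "j+2"] less.IH[of "j+1"] less.prems 3 by (simp add: algebra_simps)
    also have "\<dots> = d 1 * ladder_h (j+2)"
      using ladder_h_recurrence[of j] by simp
    finally show ?thesis using 3 by simp
  qed
qed

(* The interior equations determine d up to the factor d 1; the equation at the last rung then
   forces d 1 = 0, because h n \<noteq> h (n-1). *)
lemma rung_op_eq_zero_imp_zero:
  assumes zero: "\<And>k. 1 \<le> k \<Longrightarrow> k \<le> n \<Longrightarrow> rung_op n d k = 0"
    and "1 \<le> k" "k \<le> n"
  shows "d k = 0"
proof -
  have multiple: "d k * ladder_h 0 = d 1 * ladder_h (k-1)" if "1 \<le> k" "k \<le> n" for k
    by (rule rung_op_interior_multiple) (use zero that in auto)
  have "rung_op n d n * ladder_h 0 = d 1 * rung_op n (\<lambda>k. ladder_h (k-1)) n"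
  proof (cases "1 < n")
    case True
    then have "n - 1 - 1 = n - 2" by simp
    then show ?thesis using True multiple[of n] multiple[of "n-1"] by (simp add: rung_op_def algebra_simps)
  qed (use assms multiple[of n] in \<open>simp add: rung_op_def algebra_simps\<close>)
  then have "d 1 * (ladder_h n - ladder_h (n-1)) = 0"
    using zero[of n] rung_op_ladder_h[of n n] assms by simp
  moreover have "ladder_h n - ladder_h (n-1) \<noteq> 0"
    using ladder_h_Suc_diff_pos[of "n-1"] assms by simp
  ultimately have "d 1 = 0" by simp
  then show ?thesis using multiple[OF assms(2,3)] ladder_h_0_pos by simp
qed

lemma is_potential_rung_antisym:
  assumes "1 \<le> k0" "k0 \<le> n"
    and rung: "\<And>k. 1 \<le> k \<Longrightarrow> k \<le> n \<Longrightarrow> rung_op n c k = (if k = k0 then 1 else 0)"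
  shows "is_potential (ladder_edge n) (2*n) (2*k0-1) (2*k0) (rung_antisym c)"
  unfolding is_potential_def ladder_lap_def[symmetric]
proof
  fix i assume "i \<in> {1..2*n}"
  then show "ladder_lap n (rung_antisym c) i = (if i = 2*k0-1 then 1 else 0) - (if i = 2*k0 then 1 else 0)"
  proof (cases rule: ladder_vertex_cases)
    case (1 k)
    moreover have "(2*k-1 = 2*k0-1) = (k = k0)" "2*k-1 \<noteq> 2*k0"
      using 1 assms(1) by presburger+
    ultimately show ?thesis using ladder_lap_rung_antisym(1)[OF 1(1,2)] rung[OF 1(1,2)] by simp
  next
    case (2 k)
    moreover have "2*k \<noteq> 2*k0-1"
      using 2 assms(1) by presburger
    ultimately show ?thesis using ladder_lap_rung_antisym(2)[OF 2(1,2)] rung[OF 2(1,2)] by simp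
  qed
qed

lemma ladder_potential_rung_drop_unique:
  assumes "is_potential (ladder_edge n) (2*n) u v x" "is_potential (ladder_edge n) (2*n) u v x'"
    and "1 \<le> k" "k \<le> n"
  shows "x (2*k-1) - x (2*k) = x' (2*k-1) - x' (2*k)"
proof -
  define y where "y i = x i - x' i" for i
  have harmonic: "ladder_lap n y i = 0" if "i \<in> {1..2*n}" for i
    using assms(1,2) that
    by (simp add: y_def is_potential_def ladder_lap_def right_diff_distrib sum_subtractf)
  have "rung_op n (\<lambda>k. y (2*k-1) - y (2*k)) k = 0" if "1 \<le> k" "k \<le> n" for k
  proof -
    have "2*k-1 \<in> {1..2*n}" "2*k \<in> {1..2*n}" using that by auto
    then show ?thesis using ladder_lap_rung_drop[OF that, of y] harmonic by simp
  qed
  from rung_op_eq_zero_imp_zero[OF this assms(3,4)] show ?thesis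
    by (simp add: y_def)
qed

lemma resistance_ladder_rung:
  assumes "1 \<le> k0" "k0 \<le> n"
    and "\<And>k. 1 \<le> k \<Longrightarrow> k \<le> n \<Longrightarrow> rung_op n c k = (if k = k0 then 1 else 0)"
  shows "resistance (ladder_edge n) (2*n) (2*k0-1) (2*k0) = 2 * c k0"
proof -
  let ?P = "is_potential (ladder_edge n) (2*n) (2*k0-1) (2*k0)"
  have "?P (rung_antisym c)" by (rule is_potential_rung_antisym[OF assms])
  moreover from this have "?P (SOME x. ?P x)" by (rule someI[of ?P])
  ultimately have "resistance (ladder_edge n) (2*n) (2*k0-1) (2*k0)
      = rung_antisym c (2*k0-1) - rung_antisym c (2*k0)"
    unfolding resistance_def Let_def using ladder_potential_rung_drop_unique assms(1,2) by blast
  then show ?thesis using rung_antisym_odd[OF assms(1)] rung_antisym_even by simp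
qed

theorem mainTheorem4:
  fixes n :: nat
  assumes "n \<ge> 1"
  shows "resistance (ladder_edge n) (2*n) 1 2 =
           ((2 + sqrt 3)^n * (sqrt 3 - 1) + (2 - sqrt 3)^n * (sqrt 3 + 1)) /
           ((2 + sqrt 3)^n - (2 - sqrt 3)^n)
       \<and> resistance (ladder_edge n) (2*n) (2*n - 1) (2*n) =
           ((2 + sqrt 3)^n * (sqrt 3 - 1) + (2 - sqrt 3)^n * (sqrt 3 + 1)) /
           ((2 + sqrt 3)^n - (2 - sqrt 3)^n)"
proof -
  define c where "c k = ladder_h (k-1) / (ladder_h n - ladder_h (n-1))" for k
  have gap: "ladder_h n - ladder_h (n-1) \<noteq> 0"
    using ladder_h_Suc_diff_pos[of "n-1"] assms by simp
  have end_rung: "rung_op n c k = (if k = n then 1 else 0)" if "1 \<le> k" "k \<le> n" for k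
    using rung_op_scale[of n "1 / (ladder_h n - ladder_h (n-1))"] rung_op_ladder_h[OF that] gap
    unfolding c_def by simp
  have first_rung: "rung_op n (\<lambda>k. c (n+1-k)) k = (if k = 1 then 1 else 0)" if "1 \<le> k" "k \<le> n" for k
    using rung_op_reflect[OF that] end_rung[of "n+1-k"] that by auto
  have "1 + sqrt 3 \<noteq> (0::real)"
    by (simp add: add_nonneg_eq_0_iff)
  then have closed_form: "2 * c n = ((2 + sqrt 3)^n * (sqrt 3 - 1) + (2 - sqrt 3)^n * (sqrt 3 + 1)) /
           ((2 + sqrt 3)^n - (2 - sqrt 3)^n)"
    using ladder_h_double[of "n-1"] ladder_h_Suc_diff[of "n-1"] assms by (simp add: c_def)
  have "resistance (ladder_edge n) (2*n) 1 2 = 2 * c n"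
    using resistance_ladder_rung[OF _ assms first_rung] by simp
  moreover have "resistance (ladder_edge n) (2*n) (2*n-1) (2*n) = 2 * c n"
    using resistance_ladder_rung[OF assms order_refl end_rung] .
  ultimately show ?thesis unfolding closed_form by simp
qed

end
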